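(* Let $m\ge 2$ be an integer and set $n=15\cdot 2^{2(m-2)}$, $a=6\cdot 2^{m-2}$, $b=8\cdot 2^{m-2}$. Let $\mathscr{A}_n=\mathrm{Circ}(n,\{\pm(\lfloor n/2\rfloor+1),\dots,\pm(\lfloor n/2\rfloor+a/2)\})$ and $\mathscr{B}_n=\mathrm{Circ}(n,\{\pm1,\dots,\pm a/2\})$ (both $n$-vertex $a$-regular circulant graphs; we also write $\mathscr{A}_n,\mathscr{B}_n$ for their adjacency matrices), and let $C_n$ be the adjacency matrix of an arbitrary $n$-vertex circulant graph of degree $b$. Let $G_n$ be the graph on $2n+2$ vertices with adjacency matrix \[ \begin{bmatrix} 0 & \mathbf{j}_n^T & 0 & 0\\ \mathbf{j}_n & \mathscr{A}_n & C_n & 0\\ 0 & C_n^T & \mathscr{B}_n & \mathbf{j}_n\\ 0 & 0 & \mathbf{j}_n^T & 0 \end{bmatrix}, \] and let $a_n$ and $b_n$ be the vertices corresponding to the first and last rows, respectively. Then $G_n$ has perfect state transfer between $a_n$ and $b_n$, but there is no automorphism $\tau$ of $G_n$ with $\tau(a_n)=b_n$.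
   Context: $\mathrm{Circ}(n,S)$ denotes the circulant graph (Cayley graph of $\mathbb{Z}_n$) with vertex set $\mathbb{Z}_n$ where $x,y$ are adjacent iff $x-y\in S$ (with $S=-S$). $\mathbf{j}_n$ is the all-ones column vector of length $n$. A graph with adjacency matrix $A$ has perfect state transfer from $u$ to $v$ if $|\langle v|e^{-itA}|u\rangle|=1$ for some time $t$, where $|u\rangle$ is the standard basis vector of vertex $u$. An automorphism is a bijection of the vertex set preserving adjacency and non-adjacency. *)

theory Defs
  imports "HOL-Analysis.Analysis"
begin

text \<open>Graphs on the vertex set {0..<N} are given by adjacency predicates
  adj :: nat => nat => bool; the adjacency matrix has entries 1/0.\<close>

definition adj_mat :: "(nat \<Rightarrow> nat \<Rightarrow> bool) \<Rightarrow> nat \<Rightarrow> nat \<Rightarrow> complex" where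
  "adj_mat adj i j = (if adj i j then 1 else 0)"

fun mat_pow :: "nat \<Rightarrow> (nat \<Rightarrow> nat \<Rightarrow> complex) \<Rightarrow> nat \<Rightarrow> nat \<Rightarrow> nat \<Rightarrow> complex" where
  "mat_pow N M 0 i j = (if i = j then 1 else 0)"
| "mat_pow N M (Suc k) i j = (\<Sum>l<N. M i l * mat_pow N M k l j)"

definition exp_entry :: "nat \<Rightarrow> (nat \<Rightarrow> nat \<Rightarrow> complex) \<Rightarrow> real \<Rightarrow> nat \<Rightarrow> nat \<Rightarrow> complex" where
  "exp_entry N M t v u = (\<Sum>k. ((- \<i> * complex_of_real t) ^ k / of_nat (fact k)) * mat_pow N M k v u)"

definition has_PST :: "nat \<Rightarrow> (nat \<Rightarrow> nat \<Rightarrow> bool) \<Rightarrow> nat \<Rightarrow> nat \<Rightarrow> bool" where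
  "has_PST N adj u v \<longleftrightarrow> (\<exists>t::real. cmod (exp_entry N (adj_mat adj) t v u) = 1)"

definition is_automorphism :: "nat \<Rightarrow> (nat \<Rightarrow> nat \<Rightarrow> bool) \<Rightarrow> (nat \<Rightarrow> nat) \<Rightarrow> bool" where
  "is_automorphism N adj \<tau> \<longleftrightarrow> bij_betw \<tau> {0..<N} {0..<N} \<and>
     (\<forall>x\<in>{0..<N}. \<forall>y\<in>{0..<N}. adj (\<tau> x) (\<tau> y) = adj x y)"

definition circ_adj :: "nat \<Rightarrow> int set \<Rightarrow> nat \<Rightarrow> nat \<Rightarrow> bool" where
  "circ_adj n S x y \<longleftrightarrow> x < n \<and> y < n \<and> (int x - int y) mod int n \<in> (\<lambda>s. s mod int n) ` S"

definition circ_conn_set :: "nat \<Rightarrow> nat \<Rightarrow> int set \<Rightarrow> bool" where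
  "circ_conn_set n d S \<longleftrightarrow> (\<forall>s\<in>S. - s \<in> S) \<and> (\<forall>s\<in>S. s mod int n \<noteq> 0)
     \<and> card ((\<lambda>s. s mod int n) ` S) = d"

text \<open>The graph with block adjacency matrix
  [[0, j^T, 0, 0], [j, A, C, 0], [0, C^T, B, j], [0, 0, j^T, 0]] on 2n+2 vertices:
  vertex 0 is the first row, vertices 1..n the A-block (vertex i is index i-1),
  vertices n+1..2n the B-block (vertex i is index i-n-1), vertex 2n+1 the last row.\<close>
definition block_adj :: "nat \<Rightarrow> int set \<Rightarrow> int set \<Rightarrow> int set \<Rightarrow> nat \<Rightarrow> nat \<Rightarrow> bool" where
  "block_adj n SA SB SC i j \<longleftrightarrow>
     (i = 0 \<and> 1 \<le> j \<and> j \<le> n) \<or> (j = 0 \<and> 1 \<le> i \<and> i \<le> n)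
   \<or> (1 \<le> i \<and> i \<le> n \<and> 1 \<le> j \<and> j \<le> n \<and> circ_adj n SA (i - 1) (j - 1))
   \<or> (1 \<le> i \<and> i \<le> n \<and> n + 1 \<le> j \<and> j \<le> 2 * n \<and> circ_adj n SC (i - 1) (j - n - 1))
   \<or> (n + 1 \<le> i \<and> i \<le> 2 * n \<and> 1 \<le> j \<and> j \<le> n \<and> circ_adj n SC (j - 1) (i - n - 1))
   \<or> (n + 1 \<le> i \<and> i \<le> 2 * n \<and> n + 1 \<le> j \<and> j \<le> 2 * n \<and> circ_adj n SB (i - n - 1) (j - n - 1))
   \<or> (i = 2 * n + 1 \<and> n + 1 \<le> j \<and> j \<le> 2 * n) \<or> (j = 2 * n + 1 \<and> n + 1 \<le> i \<and> i \<le> 2 * n)"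

definition conn_A :: "nat \<Rightarrow> nat \<Rightarrow> int set" where
  "conn_A n h = {s. \<exists>k::int. 1 \<le> k \<and> k \<le> int h \<and>
      (s = int (n div 2) + k \<or> s = - (int (n div 2) + k))}"

definition conn_B :: "nat \<Rightarrow> int set" where
  "conn_B h = {s. \<exists>k::int. 1 \<le> k \<and> k \<le> int h \<and> (s = k \<or> s = - k)}"

end

theory Submission
  imports Defs
begin

text \<open>Write n = 15k^2, a = 6k, b = 8k. The partition of the vertices into {a_n}, the A-block,
  the B-block and {b_n} is equitable, so the number of walks of length j from a_n to a vertex
  depends only on the cell of that vertex and evolves by the 4 x 4 quotient matrix. Its
  eigenvalues are 15k, -k, 3k, -5k; at time t = pi/(4k) the corresponding phases are
  w, w, -w, -w with w = exp(i pi/4), matching the signs of the coefficients of the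
  (b_n, a_n)-entry in the eigenexpansion, so that entry of exp(-itA) is w itself.

  An automorphism sending a_n to b_n maps the neighbours of a_n (the A-block) onto those of
  b_n (the B-block). As a/2 \<ge> 3, the B-block contains a 4-clique, whereas adjacent vertices
  of the A-block are at distance at least n - floor(n/2) - a/2 \<ge> n/3 in the integers, so no
  four of them are pairwise adjacent.\<close>

abbreviation residues :: "nat \<Rightarrow> int set \<Rightarrow> int set" where
  "residues n S \<equiv> (\<lambda>s. s mod int n) ` S"

lemma card_separated_le:
  fixes X :: "int set" and lo L n :: int and c :: nat
  assumes X: "X \<subseteq> {lo..<lo + n}" and L: "0 < L" and n: "n \<le> int c * L"
    and sep: "\<And>x y. x \<in> X \<Longrightarrow> y \<in> X \<Longrightarrow> x \<noteq> y \<Longrightarrow> L \<le> \<bar>x - y\<bar>"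
  shows "card X \<le> c"
proof -
  define bucket where "bucket x = (x - lo) div L" for x
  have "inj_on bucket X"
  proof (rule inj_onI, rule ccontr)
    fix x y assume xy: "x \<in> X" "y \<in> X" "bucket x = bucket y" "x \<noteq> y"
    have "x - lo = L * bucket x + (x - lo) mod L" "y - lo = L * bucket y + (y - lo) mod L"
      unfolding bucket_def by simp_all
    moreover have "0 \<le> (x - lo) mod L" "(x - lo) mod L < L" "0 \<le> (y - lo) mod L" "(y - lo) mod L < L"
      using L by simp_all
    moreover have "L * bucket x = L * bucket y" using xy(3) by simp
    ultimately have "\<bar>x - y\<bar> < L" by linarith
    with sep[OF xy(1,2,4)] show False by simp
  qed
  moreover have "bucket ` X \<subseteq> {0..<int c}"
  proof
    fix b assume "b \<in> bucket ` X"
    then obtain x where x: "x \<in> X" "b = (x - lo) div L" unfolding bucket_def by blast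
    have "L * b + (x - lo) mod L = x - lo" "0 \<le> (x - lo) mod L" using x(2) L by simp_all
    moreover have "x - lo < L * int c" using x X n by (auto simp: mult.commute)
    ultimately have "L * b < L * int c" by linarith
    then have "b < int c" using L by simp
    moreover have "0 \<le> b" using x X L by (auto simp: pos_imp_zdiv_nonneg_iff)
    ultimately show "b \<in> {0..<int c}" by simp
  qed
  ultimately have "card X \<le> card {0..<int c}"
    by (metis card_image card_mono finite_atLeastLessThan_int)
  then show ?thesis by simp
qed

lemma circ_adj_dist_ge:
  assumes "circ_adj n S x y" "residues n S \<subseteq> {L..int n - L}"
  shows "L \<le> \<bar>int x - int y\<bar>"
proof -
  have xy: "x < n" "y < n" and r: "(int x - int y) mod int n \<in> {L..int n - L}"
    using assms unfolding circ_adj_def by auto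
  show ?thesis
  proof (cases "y \<le> x")
    case True
    then have "(int x - int y) mod int n = int x - int y" using xy by simp
    then show ?thesis using r True by auto
  next
    case False
    have "(int x - int y) mod int n = (int x - int y + int n) mod int n" by simp
    also have "\<dots> = int x - int y + int n" using xy False by (intro mod_pos_pos_trivial) auto
    finally show ?thesis using r False by auto
  qed
qed

lemma card_residue_preimage:
  fixes \<sigma> d :: int
  assumes "0 < n" and R: "R \<subseteq> {0..<int n}" and \<sigma>: "\<sigma> = 1 \<or> \<sigma> = -1"
  shows "card {y \<in> {..<n}. (\<sigma> * int y + d) mod int n \<in> R} = card R"
proof -
  define f where "f y = (\<sigma> * int y + d) mod int n" for y
  have recover: "int y mod int n = (\<sigma> * (f y - d)) mod int n" for y
  proof -
    have "\<sigma> * (\<sigma> * int y + d - d) = int y" using \<sigma> by auto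
    then show ?thesis unfolding f_def by (metis mod_diff_left_eq mod_mult_right_eq)
  qed
  have inj: "inj_on f {..<n}"
  proof (rule inj_onI)
    fix a b assume "a \<in> {..<n}" "b \<in> {..<n}" "f a = f b"
    moreover from \<open>f a = f b\<close> have "int a mod int n = int b mod int n" by (metis recover)
    ultimately show "a = b" by simp
  qed
  have "f ` {..<n} \<subseteq> {0..<int n}" unfolding f_def using \<open>0 < n\<close> by auto
  moreover have "card (f ` {..<n}) = card {0..<int n}" using card_image[OF inj] by simp
  ultimately have onto: "f ` {..<n} = {0..<int n}" by (intro card_subset_eq) auto
  have "f ` {y \<in> {..<n}. f y \<in> R} = R"
  proof (intro equalityI subsetI)
    fix r assume "r \<in> R"
    then obtain y where "y \<in> {..<n}" "r = f y" using onto R by (metis imageE subsetD)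
    then show "r \<in> f ` {y \<in> {..<n}. f y \<in> R}" using \<open>r \<in> R\<close> by blast
  qed auto
  moreover have "inj_on f {y \<in> {..<n}. f y \<in> R}" by (rule inj_on_subset[OF inj]) auto
  ultimately have "card {y \<in> {..<n}. f y \<in> R} = card R" by (metis card_image)
  then show ?thesis unfolding f_def .
qed

lemma circ_adj_row_sum:
  assumes "x < n"
  shows "(\<Sum>y<n. adj_mat (circ_adj n S) x y) = of_nat (card (residues n S))"
proof -
  have "(\<Sum>y<n. adj_mat (circ_adj n S) x y) = of_nat (card {y \<in> {..<n}. circ_adj n S x y})"
    by (simp add: adj_mat_def flip: sum.inter_filter)
  also have "{y \<in> {..<n}. circ_adj n S x y} = {y \<in> {..<n}. (- 1 * int y + int x) mod int n \<in> residues n S}"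
    using assms unfolding circ_adj_def by auto
  also have "card \<dots> = card (residues n S)"
    using assms by (intro card_residue_preimage) auto
  finally show ?thesis .
qed

lemma circ_adj_col_sum:
  assumes "x < n"
  shows "(\<Sum>y<n. adj_mat (circ_adj n S) y x) = of_nat (card (residues n S))"
proof -
  have "(\<Sum>y<n. adj_mat (circ_adj n S) y x) = of_nat (card {y \<in> {..<n}. circ_adj n S y x})"
    by (simp add: adj_mat_def flip: sum.inter_filter)
  also have "{y \<in> {..<n}. circ_adj n S y x} = {y \<in> {..<n}. (1 * int y + - int x) mod int n \<in> residues n S}"
    using assms unfolding circ_adj_def by auto
  also have "card \<dots> = card (residues n S)"
    using assms by (intro card_residue_preimage) auto
  finally show ?thesis .
qed

definition pm_interval :: "int \<Rightarrow> nat \<Rightarrow> int set" where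
  "pm_interval c h = {s. \<exists>k. 1 \<le> k \<and> k \<le> int h \<and> (s = c + k \<or> s = - (c + k))}"

lemma conn_A_eq_pm_interval: "conn_A n h = pm_interval (int (n div 2)) h"
  unfolding conn_A_def pm_interval_def ..

lemma conn_B_eq_pm_interval: "conn_B h = pm_interval 0 h"
  unfolding conn_B_def pm_interval_def by simp

lemma residues_pm_interval:
  assumes "0 \<le> c" "c + int h < int n"
  shows "residues n (pm_interval c h) = {c + 1..c + int h} \<union> {int n - c - int h..int n - c - 1}"
proof (intro equalityI subsetI)
  fix r assume "r \<in> residues n (pm_interval c h)"
  then obtain k where k: "1 \<le> k" "k \<le> int h"
    and r: "r = (c + k) mod int n \<or> r = (- (c + k)) mod int n"
    unfolding pm_interval_def by auto
  have "(- (c + k)) mod int n = (int n - (c + k)) mod int n"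
    by (metis add.commute diff_conv_add_uminus mod_add_self1)
  also have "\<dots> = int n - (c + k)"
    using k assms by (intro mod_pos_pos_trivial) auto
  finally have "(- (c + k)) mod int n = int n - (c + k)" .
  moreover have "(c + k) mod int n = c + k"
    using k assms by (intro mod_pos_pos_trivial) auto
  ultimately show "r \<in> {c + 1..c + int h} \<union> {int n - c - int h..int n - c - 1}"
    using r k by auto
next
  fix r assume r: "r \<in> {c + 1..c + int h} \<union> {int n - c - int h..int n - c - 1}"
  show "r \<in> residues n (pm_interval c h)"
  proof (cases "r \<in> {c + 1..c + int h}")
    case True
    then have "r \<in> pm_interval c h" unfolding pm_interval_def
      by (intro CollectI exI[of _ "r - c"]) auto
    moreover have "r mod int n = r" using True r assms by auto
    ultimately show ?thesis by (metis image_eqI)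
  next
    case False
    then have "r - int n \<in> pm_interval c h" using r unfolding pm_interval_def
      by (intro CollectI exI[of _ "int n - c - r"]) auto
    moreover have "(r - int n) mod int n = r" using False r assms by auto
    ultimately show ?thesis by (metis image_eqI)
  qed
qed

lemma card_residues_conn_A:
  assumes "int (n div 2) + int h < int n"
  shows "card (residues n (conn_A n h)) = 2 * h"
proof -
  have "card ({int (n div 2) + 1..int (n div 2) + int h}
      \<union> {int n - int (n div 2) - int h..int n - int (n div 2) - 1}) = h + h"
    by (subst card_Un_disjoint) auto
  then show ?thesis
    using assms by (simp add: conn_A_eq_pm_interval residues_pm_interval)
qed

lemma card_residues_conn_B:
  assumes "2 * int h < int n"
  shows "card (residues n (conn_B h)) = 2 * h"
proof -
  have "card ({1..int h} \<union> {int n - int h..int n - 1}) = h + h"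
    using assms by (subst card_Un_disjoint) auto
  then show ?thesis
    using assms by (simp add: conn_B_eq_pm_interval residues_pm_interval)
qed

lemma residues_conn_A_subset:
  assumes "int (n div 2) + int h < int n"
  shows "residues n (conn_A n h) \<subseteq> {int n - int (n div 2) - int h..int (n div 2) + int h}"
  using assms by (auto simp: conn_A_eq_pm_interval residues_pm_interval)

lemma circ_adj_conn_B:
  assumes "x < n" "y < n" "1 \<le> \<bar>int x - int y\<bar>" "\<bar>int x - int y\<bar> \<le> int h"
  shows "circ_adj n (conn_B h) x y"
proof -
  have "int x - int y \<in> conn_B h" unfolding conn_B_def using assms(3,4)
    by (intro CollectI exI[of _ "\<bar>int x - int y\<bar>"]) auto
  then show ?thesis unfolding circ_adj_def using assms by auto
qed

lemma mat_pow_equitable_eigen: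
  fixes M :: "nat \<Rightarrow> nat \<Rightarrow> complex" and cell :: "nat \<Rightarrow> 'c" and Q :: "'c \<Rightarrow> 'c \<Rightarrow> complex"
    and w :: "'r \<Rightarrow> 'c \<Rightarrow> complex"
  assumes equitable: "\<And>i g. i < N \<Longrightarrow> (\<Sum>l<N. M i l * g (cell l)) = (\<Sum>q\<in>C. Q (cell i) q * g q)"
    and eigen: "\<And>r i. r \<in> R \<Longrightarrow> i < N \<Longrightarrow> (\<Sum>q\<in>C. Q (cell i) q * w r q) = \<mu> r * w r (cell i)"
    and init: "\<And>i. i < N \<Longrightarrow> (\<Sum>r\<in>R. w r (cell i)) = (if i = u then 1 else 0)"
    and "i < N"
  shows "mat_pow N M j i u = (\<Sum>r\<in>R. w r (cell i) * \<mu> r ^ j)"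
  using \<open>i < N\<close>
proof (induction j arbitrary: i)
  case 0
  then show ?case using init by simp
next
  case (Suc j)
  have "mat_pow N M (Suc j) i u = (\<Sum>l<N. M i l * (\<Sum>r\<in>R. w r (cell l) * \<mu> r ^ j))"
    using Suc.IH by simp
  also have "\<dots> = (\<Sum>q\<in>C. Q (cell i) q * (\<Sum>r\<in>R. w r q * \<mu> r ^ j))"
    by (rule equitable[OF Suc.prems])
  also have "\<dots> = (\<Sum>r\<in>R. (\<Sum>q\<in>C. Q (cell i) q * w r q) * \<mu> r ^ j)"
    by (simp add: sum_distrib_left sum_distrib_right sum.swap[of _ C] mult.assoc)
  also have "\<dots> = (\<Sum>r\<in>R. w r (cell i) * \<mu> r ^ Suc j)"
    by (rule sum.cong) (simp_all add: eigen[OF _ Suc.prems])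
  finally show ?case .
qed

lemma exp_entry_spectral:
  assumes walks: "\<And>j. mat_pow N M j v u = (\<Sum>r\<in>R. c r * \<mu> r ^ j)"
  shows "exp_entry N M t v u = (\<Sum>r\<in>R. c r * exp (- \<i> * complex_of_real t * \<mu> r))"
proof -
  define z where "z = - \<i> * complex_of_real t"
  have "(\<lambda>j. (z * \<mu> r) ^ j / of_nat (fact j)) sums exp (z * \<mu> r)" for r
    using exp_converges[of "z * \<mu> r"] by (simp add: scaleR_conv_of_real divide_inverse mult.commute)
  then have "(\<lambda>j. \<Sum>r\<in>R. c r * ((z * \<mu> r) ^ j / of_nat (fact j))) sums (\<Sum>r\<in>R. c r * exp (z * \<mu> r))"
    by (intro sums_sum sums_mult)
  moreover have "z ^ j / of_nat (fact j) * mat_pow N M j v u = (\<Sum>r\<in>R. c r * ((z * \<mu> r) ^ j / of_nat (fact j)))" for j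
    unfolding walks by (simp add: sum_distrib_left power_mult_distrib algebra_simps)
  ultimately show ?thesis unfolding exp_entry_def z_def by (simp add: sums_iff)
qed

lemma no_automorphism_swapping_ends:
  assumes h_lt: "int (n div 2) + int h < int n"
    and n_le: "int n \<le> 3 * (int n - int (n div 2) - int h)"
    and "3 \<le> h" "4 \<le> n"
  shows "\<not> (\<exists>\<tau>. is_automorphism (2 * n + 2) (block_adj n (conn_A n h) (conn_B h) SC) \<tau>
              \<and> \<tau> 0 = 2 * n + 1)"
proof
  define G where "G = block_adj n (conn_A n h) (conn_B h) SC"
  define L where "L = int n - int (n div 2) - int h"
  assume "\<exists>\<tau>. is_automorphism (2 * n + 2) (block_adj n (conn_A n h) (conn_B h) SC) \<tau> \<and> \<tau> 0 = 2 * n + 1"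
  then obtain \<tau> where bij: "bij_betw \<tau> {0..<2*n+2} {0..<2*n+2}"
    and pres: "\<And>x y. x < 2*n+2 \<Longrightarrow> y < 2*n+2 \<Longrightarrow> G (\<tau> x) (\<tau> y) = G x y"
    and \<tau>0: "\<tau> 0 = 2 * n + 1"
    unfolding is_automorphism_def G_def by auto
  define V where "V = {v \<in> {0..<2*n+2}. \<tau> v \<in> {n+1..n+4}}"
  have inj: "inj_on \<tau> V" using bij unfolding V_def bij_betw_def by (auto intro: inj_on_subset)
  have "\<tau> ` V = \<tau> ` {0..<2*n+2} \<inter> {n+1..n+4}" unfolding V_def by auto
  also have "\<dots> = {n+1..n+4}" using bij \<open>4 \<le> n\<close> unfolding bij_betw_def by auto
  finally have card_V: "card V = 4" using card_image[OF inj] by simp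
  have V_in_A: "1 \<le> v \<and> v \<le> n" if "v \<in> V" for v
  proof -
    have "G (\<tau> 0) (\<tau> v)" using that \<tau>0 \<open>4 \<le> n\<close> unfolding V_def G_def block_adj_def by auto
    then have "G 0 v" using pres[of 0 v] that unfolding V_def by auto
    then show ?thesis unfolding G_def block_adj_def by auto
  qed
  have sep: "L \<le> \<bar>int v - int w\<bar>" if "v \<in> V" "w \<in> V" "v \<noteq> w" for v w
  proof -
    have "\<tau> v \<noteq> \<tau> w" using inj that unfolding inj_on_def by blast
    then have "circ_adj n (conn_B h) (\<tau> v - n - 1) (\<tau> w - n - 1)"
      using that \<open>3 \<le> h\<close> \<open>4 \<le> n\<close> unfolding V_def by (intro circ_adj_conn_B) auto
    then have "G (\<tau> v) (\<tau> w)" using that \<open>4 \<le> n\<close> unfolding V_def G_def block_adj_def by auto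
    then have "G v w" using pres that unfolding V_def by auto
    then have "circ_adj n (conn_A n h) (v - 1) (w - 1)"
      using V_in_A[OF that(1)] V_in_A[OF that(2)] unfolding G_def block_adj_def by auto
    moreover have "residues n (conn_A n h) \<subseteq> {L..int n - L}"
      using residues_conn_A_subset[OF h_lt] unfolding L_def by simp
    ultimately have "L \<le> \<bar>int (v - 1) - int (w - 1)\<bar>" by (rule circ_adj_dist_ge)
    then show ?thesis using V_in_A[OF that(1)] V_in_A[OF that(2)] by simp
  qed
  have "card (int ` V) \<le> 3"
  proof (rule card_separated_le)
    show "int ` V \<subseteq> {1..<1 + int n}" using V_in_A by force
    show "0 < L" "int n \<le> int 3 * L" using n_le \<open>4 \<le> n\<close> unfolding L_def by simp_all
  qed (use sep in auto)
  then show False using card_V by (simp add: card_image)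
qed

definition block_cell :: "nat \<Rightarrow> nat \<Rightarrow> nat" where
  "block_cell n i = (if i = 0 then 0 else if i \<le> n then 1 else if i \<le> 2 * n then 2 else 3)"

text \<open>Entry (p, q) is the number of neighbours in cell q of any vertex in cell p;
  dA, dB, dC are the degrees of the circulant blocks.\<close>
definition block_quotient :: "nat \<Rightarrow> nat \<Rightarrow> nat \<Rightarrow> nat \<Rightarrow> nat \<Rightarrow> nat \<Rightarrow> complex" where
  "block_quotient n dA dB dC p q =
     of_nat ([[0, n, 0, 0], [1, dA, dC, 0], [0, dC, dB, 1], [0, 0, n, 0]] ! p ! q)"

lemma sum_lessThan_add:
  fixes g :: "nat \<Rightarrow> 'a::comm_monoid_add"
  shows "(\<Sum>l<a + b. g l) = (\<Sum>l<a. g l) + (\<Sum>l<b. g (l + a))"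
  by (induction b) (simp_all add: ac_simps)

lemma sum_block_cells:
  fixes g :: "nat \<Rightarrow> 'a::comm_monoid_add"
  shows "(\<Sum>l<2*n+2. g l) = g 0 + (\<Sum>l<n. g (l + 1)) + (\<Sum>l<n. g (l + n + 1)) + g (2*n + 1)"
proof -
  have "(\<Sum>l<2*n+2. g l) = (\<Sum>l<1 + (n + n) + 1. g l)" by (simp add: mult_2)
  also have "\<dots> = g 0 + (\<Sum>l<n. g (l + 1)) + (\<Sum>l<n. g (l + n + 1)) + g (n + n + 1)"
    by (simp only: sum_lessThan_add) (simp add: ac_simps)
  finally show ?thesis by (simp add: mult_2)
qed

lemma sum_lessThan_4: "(\<Sum>q<4. f q) = f 0 + f 1 + f 2 + f (3::nat)"
  by (simp add: eval_nat_numeral)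

lemma block_adj_corners:
  "\<not> block_adj n SA SB SC 0 0" "\<not> block_adj n SA SB SC 0 (Suc (2 * n))"
  "\<not> block_adj n SA SB SC (Suc (2 * n)) 0" "\<not> block_adj n SA SB SC (Suc (2 * n)) (Suc (2 * n))"
  unfolding block_adj_def by auto

text \<open>Indices are written with Suc, the simp normal form of l + 1 and l + n + 1.\<close>
lemma block_adj_entries:
  assumes "x < n" "l < n"
  shows "block_adj n SA SB SC 0 (Suc l)"
    "\<not> block_adj n SA SB SC 0 (Suc (l + n))"
    "block_adj n SA SB SC (Suc x) 0"
    "block_adj n SA SB SC (Suc x) (Suc l) = circ_adj n SA x l"
    "block_adj n SA SB SC (Suc x) (Suc (l + n)) = circ_adj n SC x l"
    "\<not> block_adj n SA SB SC (Suc x) (Suc (2 * n))"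
    "\<not> block_adj n SA SB SC (Suc (x + n)) 0"
    "block_adj n SA SB SC (Suc (x + n)) (Suc l) = circ_adj n SC l x"
    "block_adj n SA SB SC (Suc (x + n)) (Suc (l + n)) = circ_adj n SB x l"
    "block_adj n SA SB SC (Suc (x + n)) (Suc (2 * n))"
    "\<not> block_adj n SA SB SC (Suc (2 * n)) (Suc l)"
    "block_adj n SA SB SC (Suc (2 * n)) (Suc (l + n))"
  using assms unfolding block_adj_def by auto

lemma block_adj_equitable:
  assumes "i < 2*n+2"
  shows "(\<Sum>l<2*n+2. adj_mat (block_adj n SA SB SC) i l * g (block_cell n l)) =
    (\<Sum>q<4. block_quotient n (card (residues n SA)) (card (residues n SB)) (card (residues n SC))
       (block_cell n i) q * g q)"
proof -
  let ?M = "adj_mat (block_adj n SA SB SC)"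
  have cells: "block_cell n (Suc l) = 1" "block_cell n (Suc (l + n)) = 2" if "l < n" for l
    using that unfolding block_cell_def by auto
  have lhs: "(\<Sum>l<2*n+2. ?M i l * g (block_cell n l)) = ?M i 0 * g 0 + (\<Sum>l<n. ?M i (l + 1)) * g 1
      + (\<Sum>l<n. ?M i (l + n + 1)) * g 2 + ?M i (2*n + 1) * g 3"
    unfolding sum_block_cells sum_distrib_right by (simp add: cells block_cell_def)
  consider "i = 0" | x where "x < n" "i = Suc x" | x where "x < n" "i = Suc (x + n)"
    | "i = Suc (2 * n)"
  proof -
    have "i = 0 \<or> i - 1 < n \<and> i = Suc (i - 1) \<or> i - n - 1 < n \<and> i = Suc (i - n - 1 + n)
        \<or> i = Suc (2 * n)"
      using assms by arith
    then show thesis using that by blast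
  qed
  then show ?thesis
    unfolding lhs sum_lessThan_4
    by cases (simp_all add: adj_mat_def block_adj_corners block_adj_entries block_quotient_def
        block_cell_def circ_adj_row_sum[unfolded adj_mat_def] circ_adj_col_sum[unfolded adj_mat_def])
qed

definition quotient_eigenvalue :: "complex \<Rightarrow> nat \<Rightarrow> complex" where
  "quotient_eigenvalue K r = [15 * K, - K, 3 * K, - 5 * K] ! r"

definition quotient_eigenvector :: "complex \<Rightarrow> nat \<Rightarrow> nat \<Rightarrow> complex" where
  "quotient_eigenvector K r p =
     [[1/32, 1/(32*K), 1/(32*K), 1/32], [15/32, -1/(32*K), -1/(32*K), 15/32],
      [5/16, 1/(16*K), -1/(16*K), -5/16], [3/16, -1/(16*K), 1/(16*K), -3/16]] ! r ! p"

lemma quotient_eigenvector_eigen: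
  assumes "0 < k" "r < 4" "p < 4"
  shows "(\<Sum>q<4. block_quotient (15 * k^2) (6 * k) (6 * k) (8 * k) p q * quotient_eigenvector (of_nat k) r q)
    = quotient_eigenvalue (of_nat k) r * quotient_eigenvector (of_nat k) r p"
proof -
  have "r \<in> {0, 1, 2, 3}" "p \<in> {0, 1, 2, 3}" using assms by auto
  then show ?thesis
    using assms by (auto simp: sum_lessThan_4 block_quotient_def quotient_eigenvector_def quotient_eigenvalue_def
      field_simps power2_eq_square)
qed

lemma quotient_eigenvector_sum:
  assumes "p < 4"
  shows "(\<Sum>r<4. quotient_eigenvector K r p) = (if p = 0 then 1 else 0)"
proof -
  have "p \<in> {0, 1, 2, 3}" using assms by auto
  then show ?thesis by (auto simp: sum_lessThan_4 quotient_eigenvector_def)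
qed

lemma block_adj_walks_between_ends:
  assumes "0 < k" "n = 15 * k^2"
    and "card (residues n SA) = 6 * k" "card (residues n SB) = 6 * k" "card (residues n SC) = 8 * k"
  shows "mat_pow (2*n+2) (adj_mat (block_adj n SA SB SC)) j (2*n+1) 0
    = (\<Sum>r<4. quotient_eigenvector (of_nat k) r 3 * quotient_eigenvalue (of_nat k) r ^ j)"
proof -
  let ?M = "adj_mat (block_adj n SA SB SC)"
  let ?Q = "block_quotient (15 * k^2) (6 * k) (6 * k) (8 * k)"
  let ?w = "quotient_eigenvector (of_nat k)"
  let ?\<mu> = "quotient_eigenvalue (of_nat k)"
  have cell_lt: "block_cell n i < 4" for i unfolding block_cell_def by simp
  have "mat_pow (2*n+2) ?M j (2*n+1) 0 = (\<Sum>r<4. ?w r (block_cell n (2*n+1)) * ?\<mu> r ^ j)"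
  proof (rule mat_pow_equitable_eigen)
    show "(\<Sum>l<2*n+2. ?M i l * g (block_cell n l)) = (\<Sum>q<4. ?Q (block_cell n i) q * g q)"
      if "i < 2*n+2" for i and g :: "nat \<Rightarrow> complex"
      using block_adj_equitable[OF that, of SA SB SC g] assms by simp
    show "(\<Sum>q<4. ?Q (block_cell n i) q * ?w r q) = ?\<mu> r * ?w r (block_cell n i)"
      if "r \<in> {..<4}" for r i
      using quotient_eigenvector_eigen[OF \<open>0 < k\<close> _ cell_lt] that by simp
    show "(\<Sum>r<4. ?w r (block_cell n i)) = (if i = 0 then 1 else 0)" for i
      by (simp add: quotient_eigenvector_sum[OF cell_lt]) (simp add: block_cell_def)
  qed simp
  moreover have "block_cell n (2*n+1) = 3" unfolding block_cell_def by simp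
  ultimately show ?thesis by simp
qed

lemma block_adj_PST:
  assumes "0 < k" "n = 15 * k^2"
    and "card (residues n SA) = 6 * k" "card (residues n SB) = 6 * k" "card (residues n SC) = 8 * k"
  shows "has_PST (2*n+2) (block_adj n SA SB SC) 0 (2*n+1)"
proof -
  define t where "t = pi / (4 * real k)"
  define p where "p = \<i> * complex_of_real (pi / 4)"
  have "exp_entry (2*n+2) (adj_mat (block_adj n SA SB SC)) t (2*n+1) 0
    = (\<Sum>r<4. quotient_eigenvector (of_nat k) r 3 * exp (- \<i> * complex_of_real t * quotient_eigenvalue (of_nat k) r))"
    by (rule exp_entry_spectral) (rule block_adj_walks_between_ends[OF assms])
  also have "\<dots> = exp p"
  proof -
    let ?z = "\<lambda>r. - \<i> * complex_of_real t * quotient_eigenvalue (of_nat k) r"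
    have tk: "complex_of_real t * of_nat k = complex_of_real pi / 4"
      unfolding t_def using \<open>0 < k\<close> by (simp add: field_simps)
    have z0: "?z 0 = p + \<i> * (of_int (-2) * (complex_of_real pi * 2))"
      and z1: "?z 1 = p"
      and z2: "?z 2 = (p + \<i> * complex_of_real pi) + \<i> * (of_int (-1) * (complex_of_real pi * 2))"
      and z3: "?z 3 = p + \<i> * complex_of_real pi"
      unfolding p_def quotient_eigenvalue_def using tk by (simp_all add: algebra_simps)
    have "exp (?z 0) = exp p" "exp (?z 1) = exp p" "exp (?z 2) = - exp p" "exp (?z 3) = - exp p"
      unfolding z0 z1 z2 z3 exp_plus_2pin by (simp_all add: exp_add)
    then show ?thesis by (simp add: sum_lessThan_4 quotient_eigenvector_def field_simps)
  qed
  finally show ?thesis unfolding has_PST_def p_def by (metis norm_exp_i_times of_real_divide)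
qed

lemma block_parameter_bounds:
  assumes "0 < k" "n = 15 * k^2"
  shows "int (n div 2) + int (3 * k) < int n" "2 * int (3 * k) < int n"
    "int n \<le> 3 * (int n - int (n div 2) - int (3 * k))"
proof -
  have "2 * (n div 2) \<le> n" by simp
  then have n: "int n = 15 * (int k * int k)" "2 * int (n div 2) \<le> int n"
    using assms(2) by (simp add: power2_eq_square, linarith)
  have "int k \<le> int k * int k" using assms(1) by simp
  then show "int (n div 2) + int (3 * k) < int n" "2 * int (3 * k) < int n"
    using n assms(1) by linarith+
  show "int n \<le> 3 * (int n - int (n div 2) - int (3 * k))"
  proof (cases "k = 1")
    case True
    then show ?thesis using assms(2) by simp
  next
    case False
    then have "2 * int k \<le> int k * int k" using assms(1) by (simp add: mult_right_mono)
    then show ?thesis using n by simp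
  qed
qed

theorem theorem2:
  fixes m n a b :: nat and SC :: "int set"
  assumes "m \<ge> 2"
    and "n = 15 * 2 ^ (2 * (m - 2))"
    and "a = 6 * 2 ^ (m - 2)"
    and "b = 8 * 2 ^ (m - 2)"
    and "circ_conn_set n b SC"
  shows "has_PST (2 * n + 2) (block_adj n (conn_A n (a div 2)) (conn_B (a div 2)) SC) 0 (2 * n + 1)
    \<and> \<not> (\<exists>\<tau>. is_automorphism (2 * n + 2) (block_adj n (conn_A n (a div 2)) (conn_B (a div 2)) SC) \<tau>
              \<and> \<tau> 0 = 2 * n + 1)"
proof -
  define k :: nat where "k = 2 ^ (m - 2)"
  have k: "0 < k" "n = 15 * k^2" "a div 2 = 3 * k"
    using assms(2,3) unfolding k_def by (simp_all add: power_mult[symmetric] mult.commute)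
  note bounds = block_parameter_bounds[OF k(1,2)]
  have "card (residues n (conn_A n (3 * k))) = 6 * k" using card_residues_conn_A[OF bounds(1)] by simp
  moreover have "card (residues n (conn_B (3 * k))) = 6 * k" using card_residues_conn_B[OF bounds(2)] by simp
  moreover have "card (residues n SC) = 8 * k"
    using assms(4,5) unfolding circ_conn_set_def k_def by simp
  ultimately have "has_PST (2 * n + 2) (block_adj n (conn_A n (3 * k)) (conn_B (3 * k)) SC) 0 (2 * n + 1)"
    using k by (intro block_adj_PST)
  moreover have "\<not> (\<exists>\<tau>. is_automorphism (2 * n + 2) (block_adj n (conn_A n (3 * k)) (conn_B (3 * k)) SC) \<tau>
      \<and> \<tau> 0 = 2 * n + 1)"
    using k(1) bounds by (intro no_automorphism_swapping_ends) auto
  ultimately show ?thesis unfolding k(3) by blast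
qed

end
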